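(* Let $N_0>d$, let $w\ge0$ on $\mathbb{R}^d$ and set $\widetilde w(x)=\sup_{|y-x|\le1}w(y)$ and $\mathcal{A}w=\Psi^{(N_0)}*\widetilde w$ with $\Psi^{(N_0)}(x)=(1+|x|^2)^{-N_0/2}$; assume $0<\mathcal{A}w(x)<\infty$ for all $x$. Then for every $\ell\in\mathbb{R}$ and every multi-index $\gamma\in\mathbb{N}^d$ there is $C$ depending only on $d,N_0,\ell,\gamma$ such that for all $x\in\mathbb{R}^d$, $$|D^\gamma(\mathcal{A}w)^\ell(x)|\le C(\mathcal{A}w)^\ell(x)\le C^2(1+|x|^2)^{N_0|\ell|/2}(\mathcal{A}w)^\ell(0).$$
   Context: $D^\gamma$ denotes the partial derivative of multi-index $\gamma$. *)

theory Defs
  imports "HOL-Analysis.Analysis"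
begin

definition Psi :: "real \<Rightarrow> real ^ 'n::finite \<Rightarrow> real" where
  "Psi N0 x = (1 + (norm x)\<^sup>2) powr (- N0 / 2)"

definition wtilde :: "(real ^ 'n::finite \<Rightarrow> real) \<Rightarrow> real ^ 'n \<Rightarrow> ennreal" where
  "wtilde w x = (SUP y\<in>cball x 1. ennreal (w y))"

definition Aw :: "real \<Rightarrow> (real ^ 'n::finite \<Rightarrow> real) \<Rightarrow> real ^ 'n \<Rightarrow> ennreal" where
  "Aw N0 w x = (\<integral>\<^sup>+ y. ennreal (Psi N0 (x - y)) * wtilde w y \<partial>lborel)"

definition partial :: "'n::finite \<Rightarrow> (real ^ 'n \<Rightarrow> real) \<Rightarrow> real ^ 'n \<Rightarrow> real" where
  "partial i f x = deriv (\<lambda>t. f (x + t *\<^sub>R axis i 1)) 0"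

fun partials :: "'n::finite list \<Rightarrow> (real ^ 'n \<Rightarrow> real) \<Rightarrow> real ^ 'n \<Rightarrow> real" where
  "partials [] f = f"
| "partials (i # is) f = partial i (partials is f)"

definition Dmulti :: "('n::finite \<Rightarrow> nat) \<Rightarrow> (real ^ 'n \<Rightarrow> real) \<Rightarrow> real ^ 'n \<Rightarrow> real" where
  "Dmulti \<gamma> f = partials (SOME l. \<forall>i. count_list l i = \<gamma> i) f"

end

theory Submission
  imports Defs
begin

text \<open>Since \<open>wtilde w\<close> need not be measurable, \<open>Aw N0 w\<close> is a lower integral. Replacing
  \<open>wtilde w\<close> by an essentially largest measurable minorant turns it into an honest convolution
  \<open>A = h * Psi\<close> with a measurable weight \<open>h \<ge> 0\<close>, and \<open>0 < A < \<infinity>\<close> makes all integrals below finite.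

  Kernels \<open>p(z) (1 + |z|^2)^(-N0/2 - k)\<close> with \<open>deg p \<le> 2k\<close> are bounded by multiples of \<open>Psi\<close> and
  closed under directional derivatives. Peetre's inequality
  \<open>Psi(z + s) \<le> (2 (1 + |s|^2))^(N0/2) Psi(z)\<close> dominates difference quotients, so derivatives pass
  under the convolution. Hence every derivative of \<open>A^l\<close> is a finite sum of terms
  \<open>c A^r (h * \<phi>\<^sub>1) \<dots> (h * \<phi>\<^sub>k)\<close> with \<open>r + k = l\<close>, each bounded by a constant times \<open>A^l\<close>, the
  constant depending on the kernels but not on \<open>w\<close>. The growth bound is Peetre's inequality
  integrated against \<open>h\<close>, used in both directions to cover negative \<open>l\<close>.\<close>

lemma one_plus_norm_sq_pos: "0 < 1 + (norm (z::'a::real_normed_vector))\<^sup>2"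
  by (simp add: add_pos_nonneg)

lemma Psi_pos: "0 < Psi N0 z"
  unfolding Psi_def using one_plus_norm_sq_pos[of z] by simp

lemma continuous_on_Psi: "continuous_on UNIV (Psi N0 :: real^'n::finite \<Rightarrow> real)"
  unfolding Psi_def by (intro continuous_intros ballI) (metis one_plus_norm_sq_pos less_irrefl)

lemma borel_measurable_Psi[measurable]: "(Psi N0 :: real^'n::finite \<Rightarrow> real) \<in> borel_measurable borel"
  using continuous_on_Psi by (rule borel_measurable_continuous_onI)

lemma Peetre_inequality:
  fixes z s :: "'a::real_normed_vector"
  shows "1 + (norm z)\<^sup>2 \<le> 2 * (1 + (norm (z + s))\<^sup>2) * (1 + (norm s)\<^sup>2)"
proof -
  have "norm z \<le> norm (z + s) + norm s"
    using norm_triangle_ineq4[of "z + s" s] by simp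
  then have "(norm z)\<^sup>2 \<le> (norm (z + s) + norm s)\<^sup>2"
    by (intro power_mono) auto
  also have "\<dots> \<le> 2 * (norm (z + s))\<^sup>2 + 2 * (norm s)\<^sup>2"
    by (smt (verit) sum_squares_bound power2_sum)
  finally have "(norm z)\<^sup>2 \<le> 2 * (norm (z + s))\<^sup>2 + 2 * (norm s)\<^sup>2" .
  moreover have "0 \<le> (norm (z + s))\<^sup>2 * (norm s)\<^sup>2" by simp
  moreover have "2 * (1 + (norm (z + s))\<^sup>2) * (1 + (norm s)\<^sup>2)
      = 2 + 2 * (norm (z + s))\<^sup>2 + 2 * (norm s)\<^sup>2 + 2 * ((norm (z + s))\<^sup>2 * (norm s)\<^sup>2)"
    by (simp add: algebra_simps)
  ultimately show ?thesis by linarith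
qed

lemma Psi_shift_le:
  fixes z s :: "real^'n::finite"
  assumes "0 \<le> N0"
  shows "Psi N0 (z + s) \<le> (2 * (1 + (norm s)\<^sup>2)) powr (N0 / 2) * Psi N0 z"
proof -
  have pos: "0 < 1 + (norm (z + s))\<^sup>2" "0 < 1 + (norm s)\<^sup>2" "0 < 1 + (norm z)\<^sup>2"
    by (rule one_plus_norm_sq_pos)+
  have "1 + (norm z)\<^sup>2 \<le> (1 + (norm (z + s))\<^sup>2) * (2 * (1 + (norm s)\<^sup>2))"
    using Peetre_inequality[of z s] by (metis mult.commute mult.assoc)
  then have "(1 + (norm z)\<^sup>2) / (2 * (1 + (norm s)\<^sup>2)) \<le> 1 + (norm (z + s))\<^sup>2"
    using pos by (simp add: pos_divide_le_eq)
  then have "(1 + (norm (z + s))\<^sup>2) powr (- N0 / 2)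
      \<le> ((1 + (norm z)\<^sup>2) / (2 * (1 + (norm s)\<^sup>2))) powr (- N0 / 2)"
    using assms pos by (intro powr_mono2') auto
  also have "\<dots> = (2 * (1 + (norm s)\<^sup>2)) powr (N0 / 2) * (1 + (norm z)\<^sup>2) powr (- N0 / 2)"
    using pos by (simp add: powr_divide powr_minus divide_simps)
  finally show ?thesis unfolding Psi_def by simp
qed

lemma nn_integral_le_of_measurable_minorants:
  assumes "\<And>t. t \<in> borel_measurable M \<Longrightarrow> t \<le> f \<Longrightarrow> integral\<^sup>N M t \<le> I"
  shows "integral\<^sup>N M f \<le> I"
  unfolding nn_integral_def
proof (rule SUP_least, safe)
  fix s assume s: "simple_function M s" "s \<le> f"
  then have "integral\<^sup>N M s \<le> I" by (intro assms) (auto intro: borel_measurable_simple_function)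
  then show "integral\<^sup>S M s \<le> I" using s(1) by (simp add: nn_integral_eq_simple_integral)
qed

lemma AE_le_of_nn_integral_le:
  fixes f g :: "'a \<Rightarrow> ennreal"
  assumes [measurable]: "f \<in> borel_measurable M" "g \<in> borel_measurable M"
    and "f \<le> g" and "integral\<^sup>N M g \<le> integral\<^sup>N M f" and "integral\<^sup>N M f < \<infinity>"
  shows "AE x in M. g x \<le> f x"
proof -
  have "integral\<^sup>N M f + (\<integral>\<^sup>+x. g x - f x \<partial>M) = (\<integral>\<^sup>+x. f x + (g x - f x) \<partial>M)"
    by (intro nn_integral_add[symmetric]) auto
  also have "\<dots> = integral\<^sup>N M g"
    using \<open>f \<le> g\<close> by (intro nn_integral_cong) (simp add: le_fun_def add_diff_inverse_ennreal)
  finally have "integral\<^sup>N M f + (\<integral>\<^sup>+x. g x - f x \<partial>M) \<le> integral\<^sup>N M f + 0"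
    using assms(4) by simp
  then have "(\<integral>\<^sup>+x. g x - f x \<partial>M) = 0"
    using assms(5) unfolding ennreal_add_left_cancel_le by auto
  then have "AE x in M. g x - f x = 0" by (subst (asm) nn_integral_0_iff_AE) auto
  then show ?thesis by eventually_elim (simp add: diff_eq_0_iff_ennreal)
qed

text \<open>For non-measurable \<open>f\<close> the integral is the supremum over simple minorants; the
  supremum of countably many of them that attain it is an essentially largest measurable minorant.\<close>
lemma measurable_envelope:
  fixes f :: "'a \<Rightarrow> ennreal"
  assumes fin: "integral\<^sup>N M f < \<infinity>"
  obtains H where "H \<in> borel_measurable M" "H \<le> f"
    "\<And>t. t \<in> borel_measurable M \<Longrightarrow> t \<le> f \<Longrightarrow> AE x in M. t x \<le> H x"
proof -
  define S where "S = {s. simple_function M s \<and> s \<le> f}"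
  have "S \<noteq> {}" unfolding S_def by (auto intro!: exI[of _ "\<lambda>_. 0"] simp: le_fun_def)
  then obtain v :: "nat \<Rightarrow> ennreal"
    where v: "range v \<subseteq> integral\<^sup>S M ` S" "Sup (integral\<^sup>S M ` S) = Sup (range v)"
    using ennreal_SUP_countable_SUP[of S "integral\<^sup>S M"] by blast
  have "\<forall>n. \<exists>s. s \<in> S \<and> integral\<^sup>S M s = v n" using v(1) by (metis imageE range_subsetD)
  then obtain s where s: "\<And>n. s n \<in> S" "\<And>n. integral\<^sup>S M (s n) = v n" by metis
  have [measurable]: "\<And>n. s n \<in> borel_measurable M"
    using s(1) unfolding S_def by (auto intro: borel_measurable_simple_function)
  define H where "H = (\<lambda>x. SUP n. s n x)"
  have H_meas[measurable]: "H \<in> borel_measurable M" unfolding H_def by measurable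
  have H_le: "H \<le> f" using s(1) unfolding S_def H_def le_fun_def by (auto intro: SUP_least)
  have int_H: "integral\<^sup>N M H = integral\<^sup>N M f"
  proof (rule antisym)
    show "integral\<^sup>N M H \<le> integral\<^sup>N M f" using H_le by (intro nn_integral_mono) (simp add: le_fun_def)
    have "v n = integral\<^sup>N M (s n)" for n
      using s(1)[of n] s(2)[of n] unfolding S_def by (simp add: nn_integral_eq_simple_integral)
    also have "integral\<^sup>N M (s n) \<le> integral\<^sup>N M H" for n
      unfolding H_def by (intro nn_integral_mono) (auto intro: SUP_upper)
    finally show "integral\<^sup>N M f \<le> integral\<^sup>N M H"
      unfolding nn_integral_def[of M f] S_def[symmetric] v(2) by (auto intro: SUP_least)
  qed
  have "AE x in M. t x \<le> H x" if [measurable]: "t \<in> borel_measurable M" and "t \<le> f" for t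
  proof -
    have "AE x in M. max (H x) (t x) \<le> H x"
    proof (rule AE_le_of_nn_integral_le)
      show "(\<integral>\<^sup>+x. max (H x) (t x) \<partial>M) \<le> integral\<^sup>N M H"
        using H_le \<open>t \<le> f\<close> unfolding int_H by (intro nn_integral_mono) (simp add: le_fun_def)
      show "integral\<^sup>N M H < \<infinity>" using fin unfolding int_H .
    qed (auto simp: le_fun_def)
    then show ?thesis by auto
  qed
  with H_meas H_le show thesis by (rule that)
qed

lemma ennreal_mult_inverse_cancel:
  assumes "0 < a"
  shows "ennreal a * (b * ennreal (1 / a)) = b"
proof -
  have "ennreal a * ennreal (1 / a) = 1" using assms by (simp add: ennreal_mult[symmetric])
  then show ?thesis by (metis mult.commute mult.left_commute mult_1_right)
qed

lemma weighted_measurable_envelope: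
  fixes u :: "'a \<Rightarrow> real" and g :: "'a \<Rightarrow> ennreal"
  assumes [measurable]: "u \<in> borel_measurable M" and u_pos: "\<And>y. 0 < u y"
    and fin: "(\<integral>\<^sup>+y. u y * g y \<partial>M) < \<infinity>"
  obtains H where "H \<in> borel_measurable M" "H \<le> g"
    "\<And>t. t \<in> borel_measurable M \<Longrightarrow> t \<le> g \<Longrightarrow> AE y in M. t y \<le> H y"
proof -
  obtain H0 where [measurable]: "H0 \<in> borel_measurable M" and H0_le: "H0 \<le> (\<lambda>y. u y * g y)"
    and H0_max: "\<And>t. t \<in> borel_measurable M \<Longrightarrow> t \<le> (\<lambda>y. u y * g y) \<Longrightarrow> AE y in M. t y \<le> H0 y"
    using measurable_envelope[OF fin] by blast
  define H where "H = (\<lambda>y. H0 y * ennreal (1 / u y))"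
  have "H \<in> borel_measurable M" unfolding H_def by measurable
  moreover have "H \<le> g"
  proof (rule le_funI)
    fix y
    have "H y \<le> u y * g y * ennreal (1 / u y)"
      unfolding H_def using H0_le by (intro mult_right_mono) (auto simp: le_fun_def)
    also have "\<dots> = g y" using ennreal_mult_inverse_cancel[OF u_pos] by (simp add: mult_ac)
    finally show "H y \<le> g y" .
  qed
  moreover have "AE y in M. t y \<le> H y" if [measurable]: "t \<in> borel_measurable M" and "t \<le> g" for t
  proof -
    have "AE y in M. u y * t y \<le> H0 y"
      using \<open>t \<le> g\<close> by (intro H0_max) (auto simp: le_fun_def intro: mult_left_mono)
    then show ?thesis
    proof eventually_elim
      case (elim y)
      from mult_right_mono[OF elim, of "ennreal (1 / u y)"]
      show ?case using ennreal_mult_inverse_cancel[OF u_pos, of y "t y"] unfolding H_def by (simp add: mult_ac)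
    qed
  qed
  ultimately show thesis by (rule that)
qed

lemma nn_integral_mult_envelope:
  fixes v :: "'a \<Rightarrow> real" and g H :: "'a \<Rightarrow> ennreal"
  assumes [measurable]: "v \<in> borel_measurable M" and v_pos: "\<And>y. 0 < v y"
    and "H \<le> g" and H_max: "\<And>t. t \<in> borel_measurable M \<Longrightarrow> t \<le> g \<Longrightarrow> AE y in M. t y \<le> H y"
  shows "(\<integral>\<^sup>+y. v y * g y \<partial>M) = (\<integral>\<^sup>+y. v y * H y \<partial>M)"
proof (rule antisym)
  show "(\<integral>\<^sup>+y. v y * H y \<partial>M) \<le> (\<integral>\<^sup>+y. v y * g y \<partial>M)"
    using \<open>H \<le> g\<close> by (intro nn_integral_mono mult_left_mono) (auto simp: le_fun_def)
  show "(\<integral>\<^sup>+y. v y * g y \<partial>M) \<le> (\<integral>\<^sup>+y. v y * H y \<partial>M)"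
  proof (rule nn_integral_le_of_measurable_minorants)
    fix t assume [measurable]: "t \<in> borel_measurable M" and t_le: "t \<le> (\<lambda>y. v y * g y)"
    have "(\<lambda>y. t y * ennreal (1 / v y)) \<le> g"
    proof (rule le_funI)
      fix y
      have "t y * ennreal (1 / v y) \<le> v y * g y * ennreal (1 / v y)"
        using t_le by (intro mult_right_mono) (auto simp: le_fun_def)
      then show "t y * ennreal (1 / v y) \<le> g y"
        using ennreal_mult_inverse_cancel[OF v_pos] by (simp add: mult_ac)
    qed
    then have "AE y in M. t y * ennreal (1 / v y) \<le> H y" by (intro H_max) measurable
    then have "AE y in M. t y \<le> v y * H y"
    proof eventually_elim
      case (elim y)
      then have "v y * (t y * ennreal (1 / v y)) \<le> v y * H y" by (rule mult_left_mono) simp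
      then show ?case using ennreal_mult_inverse_cancel[OF v_pos] by simp
    qed
    then show "integral\<^sup>N M t \<le> (\<integral>\<^sup>+y. v y * H y \<partial>M)" by (rule nn_integral_mono_AE)
  qed
qed

definition conv :: "(real^'n::finite \<Rightarrow> real) \<Rightarrow> (real^'n \<Rightarrow> real) \<Rightarrow> real^'n \<Rightarrow> real" where
  "conv h \<phi> x = (\<integral>y. \<phi> (x - y) * h y \<partial>lborel)"

definition admissible_weight :: "real \<Rightarrow> (real^'n::finite \<Rightarrow> real) \<Rightarrow> bool" where
  "admissible_weight N0 h \<longleftrightarrow> h \<in> borel_measurable borel \<and> (\<forall>y. 0 \<le> h y) \<and>
     (\<forall>x. integrable lborel (\<lambda>y. Psi N0 (x - y) * h y)) \<and> (\<forall>x. 0 < conv h (Psi N0) x)"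

lemma nn_convolution_Psi_eq_conv:
  fixes g :: "real^'n::finite \<Rightarrow> ennreal"
  assumes pos: "\<And>x. 0 < (\<integral>\<^sup>+y. Psi N0 (x - y) * g y \<partial>lborel)"
    and fin: "\<And>x. (\<integral>\<^sup>+y. Psi N0 (x - y) * g y \<partial>lborel) < \<infinity>"
  obtains h where "admissible_weight N0 h"
    "\<And>x. (\<integral>\<^sup>+y. Psi N0 (x - y) * g y \<partial>lborel) = ennreal (conv h (Psi N0) x)"
proof -
  have Psi_shift_meas: "(\<lambda>y. Psi N0 (x - y)) \<in> borel_measurable lborel" for x :: "real^'n"
    by measurable
  obtain H where H_meas: "H \<in> borel_measurable lborel" and "H \<le> g"
    and "\<And>t. t \<in> borel_measurable lborel \<Longrightarrow> t \<le> g \<Longrightarrow> AE y in lborel. t y \<le> H y"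
    using weighted_measurable_envelope[OF Psi_shift_meas Psi_pos fin[of 0]] by blast
  then have H_eq: "(\<integral>\<^sup>+y. Psi N0 (x - y) * g y \<partial>lborel) = (\<integral>\<^sup>+y. Psi N0 (x - y) * H y \<partial>lborel)" for x
    by (intro nn_integral_mult_envelope[OF Psi_shift_meas Psi_pos])
  have [measurable]: "H \<in> borel_measurable borel" using H_meas by simp
  have "AE y in lborel. ennreal (Psi N0 (0 - y)) * H y \<noteq> \<infinity>"
    using fin[of 0] unfolding H_eq by (intro nn_integral_PInf_AE) auto
  then have H_fin: "AE y in lborel. H y \<noteq> \<infinity>"
  proof eventually_elim
    case (elim y)
    then show ?case using Psi_pos[of N0 "0 - y"] by (auto simp: ennreal_mult_eq_top_iff)
  qed
  define h where "h = (\<lambda>y. enn2real (H y))"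
  have h_meas[measurable]: "h \<in> borel_measurable borel" unfolding h_def by measurable
  have h_nonneg: "0 \<le> h y" for y unfolding h_def by simp
  have nonneg: "0 \<le> Psi N0 (x - y) * h y" for x y using Psi_pos[of N0 "x - y"] h_nonneg by simp
  have H_h: "(\<integral>\<^sup>+y. Psi N0 (x - y) * H y \<partial>lborel) = (\<integral>\<^sup>+y. ennreal (Psi N0 (x - y) * h y) \<partial>lborel)" for x
    using H_fin
  proof (intro nn_integral_cong_AE, eventually_elim)
    case (elim y)
    then show ?case unfolding h_def using Psi_pos[of N0 "x - y"]
      by (simp add: ennreal_mult ennreal_enn2real_if)
  qed
  have int: "integrable lborel (\<lambda>y. Psi N0 (x - y) * h y)" for x
    using fin[of x] unfolding H_eq H_h by (intro integrableI_nonneg) (auto intro!: nonneg)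
  have eq: "(\<integral>\<^sup>+y. Psi N0 (x - y) * g y \<partial>lborel) = ennreal (conv h (Psi N0) x)" for x
    unfolding H_eq H_h conv_def by (rule nn_integral_eq_integral[OF int]) (auto intro!: nonneg)
  have "0 < conv h (Psi N0) x" for x using pos[of x] unfolding eq by simp
  with h_meas h_nonneg int have "admissible_weight N0 h" unfolding admissible_weight_def by blast
  from this eq show thesis by (rule that)
qed

inductive polyfun_le :: "nat \<Rightarrow> (real^'n::finite \<Rightarrow> real) \<Rightarrow> bool" where
  const: "polyfun_le 0 (\<lambda>z. c)"
| coord: "polyfun_le 1 (\<lambda>z. z $ j)"
| mult: "polyfun_le a p \<Longrightarrow> polyfun_le b q \<Longrightarrow> polyfun_le (a + b) (\<lambda>z. p z * q z)"
| add: "polyfun_le a p \<Longrightarrow> polyfun_le a q \<Longrightarrow> polyfun_le a (\<lambda>z. p z + q z)"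
| Suc: "polyfun_le a p \<Longrightarrow> polyfun_le (Suc a) p"

lemma polyfun_le_mono:
  assumes "polyfun_le a p" "a \<le> b"
  shows "polyfun_le b p"
  using assms(2) by (induction b rule: dec_induct) (auto intro: polyfun_le.Suc assms(1))

lemma polyfun_le_sum:
  "finite S \<Longrightarrow> (\<And>j. j \<in> S \<Longrightarrow> polyfun_le a (f j)) \<Longrightarrow> polyfun_le a (\<lambda>z. \<Sum>j\<in>S. f j z)"
proof (induction S rule: finite_induct)
  case empty
  then show ?case using polyfun_le_mono[OF polyfun_le.const[of 0], of a] by simp
next
  case (insert x F)
  then show ?case by (simp add: polyfun_le.add)
qed

lemma polyfun_le_inner: "polyfun_le 1 (\<lambda>z::real^'n::finite. inner z e)"
proof -
  have "polyfun_le 1 (\<lambda>z::real^'n. \<Sum>j\<in>UNIV. z $ j * e $ j)"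
    using polyfun_le.mult[OF polyfun_le.coord polyfun_le.const] by (intro polyfun_le_sum) auto
  then show ?thesis by (simp add: inner_vec_def)
qed

lemma polyfun_le_one_plus_norm_sq: "polyfun_le 2 (\<lambda>z::real^'n::finite. 1 + (norm z)\<^sup>2)"
proof -
  have "polyfun_le 2 (\<lambda>z::real^'n. \<Sum>j\<in>UNIV. z $ j * z $ j)"
    using polyfun_le.mult[OF polyfun_le.coord polyfun_le.coord]
    by (intro polyfun_le_sum) (auto simp: numeral_2_eq_2)
  then have "polyfun_le 2 (\<lambda>z::real^'n. 1 + (\<Sum>j\<in>UNIV. z $ j * z $ j))"
    by (intro polyfun_le.add polyfun_le_mono[OF polyfun_le.const]) auto
  then show ?thesis by (simp add: power2_norm_eq_inner inner_vec_def)
qed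

lemma continuous_on_polyfun_le: "polyfun_le a p \<Longrightarrow> continuous_on UNIV p"
  by (induction rule: polyfun_le.induct) (auto intro!: continuous_intros)

lemma polyfun_le_bound: "polyfun_le a p \<Longrightarrow> \<exists>C\<ge>0. \<forall>z. \<bar>p z\<bar> \<le> C * (1 + norm z) ^ a"
proof (induction rule: polyfun_le.induct)
  case (const c)
  show ?case by (intro exI[of _ "\<bar>c\<bar>"]) auto
next
  case (coord j)
  show ?case by (intro exI[of _ 1]) (auto intro: order_trans[OF component_le_norm_cart])
next
  case (mult a p b q)
  then obtain C1 C2 where "C1 \<ge> 0" "C2 \<ge> 0"
    and "\<And>z. \<bar>p z\<bar> \<le> C1 * (1 + norm z) ^ a" "\<And>z. \<bar>q z\<bar> \<le> C2 * (1 + norm z) ^ b"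
    by blast
  then have "\<bar>p z\<bar> * \<bar>q z\<bar> \<le> (C1 * (1 + norm z) ^ a) * (C2 * (1 + norm z) ^ b)" for z
    by (intro mult_mono) auto
  then have "\<bar>p z * q z\<bar> \<le> C1 * C2 * (1 + norm z) ^ (a + b)" for z
    by (simp add: abs_mult power_add mult_ac)
  with \<open>C1 \<ge> 0\<close> \<open>C2 \<ge> 0\<close> show ?case by (intro exI[of _ "C1 * C2"]) auto
next
  case (add a p q)
  then obtain C1 C2 where "C1 \<ge> 0" "C2 \<ge> 0"
    and "\<And>z. \<bar>p z\<bar> \<le> C1 * (1 + norm z) ^ a" "\<And>z. \<bar>q z\<bar> \<le> C2 * (1 + norm z) ^ a"
    by blast
  then have "\<bar>p z + q z\<bar> \<le> (C1 + C2) * (1 + norm z) ^ a" for z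
    using abs_triangle_ineq[of "p z" "q z"] by (smt (verit) distrib_right)
  with \<open>C1 \<ge> 0\<close> \<open>C2 \<ge> 0\<close> show ?case by (intro exI[of _ "C1 + C2"]) auto
next
  case (Suc a p)
  then obtain C where "C \<ge> 0" and C: "\<And>z. \<bar>p z\<bar> \<le> C * (1 + norm z) ^ a" by blast
  have "C * (1 + norm z) ^ a \<le> C * (1 + norm z) ^ Suc a" for z :: "real^'a"
    using \<open>C \<ge> 0\<close> by (intro mult_left_mono power_increasing) auto
  with C \<open>C \<ge> 0\<close> show ?case by (intro exI[of _ C]) (auto intro: order_trans)
qed

lemma polyfun_le_directional_deriv:
  "polyfun_le a p \<Longrightarrow> \<exists>q. polyfun_le a q \<and> (\<forall>z. ((\<lambda>t. p (z + t *\<^sub>R e)) has_real_derivative q z) (at 0))"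
proof (induction rule: polyfun_le.induct)
  case (const c)
  show ?case by (intro exI[of _ "\<lambda>z. 0"]) (auto intro: polyfun_le.const)
next
  case (coord j)
  have "polyfun_le 1 (\<lambda>z. e $ j)" using polyfun_le.Suc[OF polyfun_le.const] by simp
  then show ?case by (intro exI[of _ "\<lambda>z. e $ j"]) (auto intro!: derivative_eq_intros)
next
  case (mult a p b q)
  then obtain p' q' where "polyfun_le a p'" "\<And>z. ((\<lambda>t. p (z + t *\<^sub>R e)) has_real_derivative p' z) (at 0)"
    and "polyfun_le b q'" "\<And>z. ((\<lambda>t. q (z + t *\<^sub>R e)) has_real_derivative q' z) (at 0)" by blast
  with mult.hyps show ?case
    by (intro exI[of _ "\<lambda>z. p' z * q z + p z * q' z"])
      (auto intro!: polyfun_le.intros derivative_eq_intros)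
next
  case (add a p q)
  then obtain p' q' where "polyfun_le a p'" "\<And>z. ((\<lambda>t. p (z + t *\<^sub>R e)) has_real_derivative p' z) (at 0)"
    and "polyfun_le a q'" "\<And>z. ((\<lambda>t. q (z + t *\<^sub>R e)) has_real_derivative q' z) (at 0)" by blast
  then show ?case
    by (intro exI[of _ "\<lambda>z. p' z + q' z"]) (auto intro!: polyfun_le.add derivative_eq_intros)
next
  case (Suc a p)
  then show ?case by (blast intro: polyfun_le.Suc)
qed

definition Psi_kernel :: "real \<Rightarrow> (real^'n::finite \<Rightarrow> real) \<Rightarrow> bool" where
  "Psi_kernel N0 \<phi> \<longleftrightarrow>
     (\<exists>k p. polyfun_le (2 * k) p \<and> \<phi> = (\<lambda>z. p z * (1 + (norm z)\<^sup>2) powr (- N0 / 2 - real k)))"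

lemma Psi_kernel_Psi: "Psi_kernel N0 (Psi N0)"
  unfolding Psi_kernel_def Psi_def by (intro exI[of _ 0] exI[of _ "\<lambda>z. 1"]) (auto intro: polyfun_le.const)

lemma borel_measurable_Psi_kernel: "Psi_kernel N0 \<phi> \<Longrightarrow> \<phi> \<in> borel_measurable borel"
  unfolding Psi_kernel_def
  by (elim exE conjE, hypsubst, rule borel_measurable_continuous_onI)
     (intro continuous_intros ballI continuous_on_polyfun_le, auto, metis one_plus_norm_sq_pos less_irrefl)

lemma Psi_kernel_bound:
  assumes "Psi_kernel N0 \<phi>"
  obtains C where "\<And>z. \<bar>\<phi> z\<bar> \<le> C * Psi N0 z"
proof -
  obtain k p where p: "polyfun_le (2 * k) p" and \<phi>: "\<phi> = (\<lambda>z. p z * (1 + (norm z)\<^sup>2) powr (- N0 / 2 - real k))"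
    using assms unfolding Psi_kernel_def by blast
  obtain C where "C \<ge> 0" and C: "\<And>z. \<bar>p z\<bar> \<le> C * (1 + norm z) ^ (2 * k)"
    using polyfun_le_bound[OF p] by blast
  have "\<bar>\<phi> z\<bar> \<le> C * 2 ^ k * Psi N0 z" for z
  proof -
    define Q where "Q = 1 + (norm z)\<^sup>2"
    have Q: "Q > 0" unfolding Q_def by (rule one_plus_norm_sq_pos)
    have "(1 + norm z) ^ (2 * k) = ((1 + norm z)\<^sup>2) ^ k" by (simp add: power_mult)
    also have "\<dots> \<le> (2 * Q) ^ k"
      unfolding Q_def using sum_squares_bound[of "norm z" 1]
      by (intro power_mono) (auto simp: power2_eq_square algebra_simps)
    finally have "\<bar>p z\<bar> \<le> C * (2 * Q) ^ k" using C[of z] \<open>C \<ge> 0\<close> by (smt (verit) mult_left_mono)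
    then have "\<bar>\<phi> z\<bar> \<le> C * (2 * Q) ^ k * Q powr (- N0 / 2 - real k)"
      unfolding \<phi> Q_def by (simp add: abs_mult mult_right_mono)
    also have "\<dots> = C * 2 ^ k * (Q powr real k * Q powr (- N0 / 2 - real k))"
      using Q by (simp add: power_mult_distrib powr_realpow mult_ac)
    also have "\<dots> = C * 2 ^ k * Psi N0 z" unfolding Psi_def Q_def by (simp add: powr_add[symmetric])
    finally show ?thesis .
  qed
  then show thesis by (rule that)
qed

lemma one_plus_norm_sq_has_derivative:
  fixes z e :: "'a::real_inner"
  shows "((\<lambda>t. 1 + (norm (z + t *\<^sub>R e))\<^sup>2) has_real_derivative 2 * inner z e) (at 0)"
proof -
  have "(\<lambda>t. 1 + (norm (z + t *\<^sub>R e))\<^sup>2) = (\<lambda>t. 1 + inner z z + 2 * t * inner z e + t\<^sup>2 * inner e e)"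
    by (simp add: power2_norm_eq_inner inner_add_left inner_add_right inner_commute)
       (simp add: algebra_simps power2_eq_square)
  then show ?thesis by (auto intro!: derivative_eq_intros)
qed

text \<open>Differentiating \<open>p(z) (1+|z|^2)^{-a}\<close> gives \<open>(p'(z)(1+|z|^2) - 2a \<langle>z,e\<rangle> p(z)) (1+|z|^2)^{-a-1}\<close>:
  both the degree bound and the exponent go up by one step.\<close>
lemma Psi_kernel_directional_deriv:
  assumes "Psi_kernel N0 \<phi>"
  obtains \<phi>' where "Psi_kernel N0 \<phi>'" "\<And>z. ((\<lambda>t. \<phi> (z + t *\<^sub>R e)) has_real_derivative \<phi>' z) (at 0)"
proof -
  obtain k p where p: "polyfun_le (2 * k) p"
    and \<phi>: "\<phi> = (\<lambda>z. p z * (1 + (norm z)\<^sup>2) powr (- N0 / 2 - real k))"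
    using assms unfolding Psi_kernel_def by blast
  obtain q where q: "polyfun_le (2 * k) q" "\<And>z. ((\<lambda>t. p (z + t *\<^sub>R e)) has_real_derivative q z) (at 0)"
    using polyfun_le_directional_deriv[OF p] by blast
  define a where "a = N0 / 2 + real k"
  define p' where "p' = (\<lambda>z. q z * (1 + (norm z)\<^sup>2) + (- 2 * a * inner z e) * p z)"
  have "polyfun_le (2 * Suc k) (\<lambda>z. q z * (1 + (norm z)\<^sup>2))"
    using polyfun_le.mult[OF q(1) polyfun_le_one_plus_norm_sq] by (rule polyfun_le_mono) simp
  moreover have "polyfun_le (2 * Suc k) (\<lambda>z. (- 2 * a * inner z e) * p z)"
    using polyfun_le.mult[OF polyfun_le.mult[OF polyfun_le.const polyfun_le_inner] p]
    by (rule polyfun_le_mono) simp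
  ultimately have p': "polyfun_le (2 * Suc k) p'"
    unfolding p'_def by (rule polyfun_le.add)
  have "((\<lambda>t. \<phi> (z + t *\<^sub>R e)) has_real_derivative
          p' z * (1 + (norm z)\<^sup>2) powr (- N0 / 2 - real (Suc k))) (at 0)" for z
  proof -
    define Q where "Q = 1 + (norm z)\<^sup>2"
    have Q: "Q > 0" unfolding Q_def by (rule one_plus_norm_sq_pos)
    have d: "((\<lambda>t. (1 + (norm (z + t *\<^sub>R e))\<^sup>2) powr (- a)) has_real_derivative
               (- a) * (1 + (norm (z + 0 *\<^sub>R e))\<^sup>2) powr (- a - of_nat 1) * (2 * inner z e)) (at 0)"
      by (rule DERIV_fun_powr[OF one_plus_norm_sq_has_derivative]) (simp add: one_plus_norm_sq_pos)
    have "\<phi> = (\<lambda>z. p z * (1 + (norm z)\<^sup>2) powr (- a))" unfolding \<phi> a_def by simp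
    then have "((\<lambda>t. \<phi> (z + t *\<^sub>R e)) has_real_derivative
               q z * Q powr (- a) + ((- a) * Q powr (- a - 1) * (2 * inner z e)) * p z) (at 0)"
      using DERIV_mult[OF q(2)[of z] d] unfolding Q_def by simp
    moreover have "Q powr (- a) = Q * Q powr (- a - 1)"
      using Q powr_add[of Q 1 "- a - 1"] by simp
    then have "q z * Q powr (- a) + ((- a) * Q powr (- a - 1) * (2 * inner z e)) * p z
        = p' z * Q powr (- a - 1)"
      unfolding p'_def Q_def by (simp add: algebra_simps)
    moreover have "- a - 1 = - N0 / 2 - real (Suc k)" unfolding a_def by simp
    ultimately show ?thesis unfolding Q_def by simp
  qed
  moreover have "Psi_kernel N0 (\<lambda>z. p' z * (1 + (norm z)\<^sup>2) powr (- N0 / 2 - real (Suc k)))"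
    unfolding Psi_kernel_def using p' by blast
  ultimately show thesis using that by blast
qed

lemma Psi_bound_nonneg:
  fixes \<phi> :: "real^'n::finite \<Rightarrow> real"
  assumes "\<And>z. \<bar>\<phi> z\<bar> \<le> C * Psi N0 z"
  shows "0 \<le> C"
proof -
  have "0 \<le> C * Psi N0 (0 :: real^'n)" by (rule order_trans[OF abs_ge_zero assms])
  then show ?thesis using Psi_pos[of N0 "0 :: real^'n"] by (auto simp: zero_le_mult_iff)
qed

lemma integral_has_real_derivative_dominated:
  fixes f :: "real \<Rightarrow> 'a \<Rightarrow> real"
  assumes f_meas: "\<And>t. f t \<in> borel_measurable M" and f'_meas: "f' \<in> borel_measurable M"
    and int: "\<And>t. integrable M (f t)"
    and der: "\<And>y. ((\<lambda>t. f t y) has_real_derivative f' y) (at 0)"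
    and g: "integrable M g"
    and dom: "\<And>t y. t \<noteq> 0 \<Longrightarrow> \<bar>t\<bar> < 1 \<Longrightarrow> \<bar>(f t y - f 0 y) / t\<bar> \<le> g y"
  shows "((\<lambda>t. \<integral>y. f t y \<partial>M) has_real_derivative (\<integral>y. f' y \<partial>M)) (at 0)"
proof -
  have "((\<lambda>t. ((\<integral>y. f t y \<partial>M) - (\<integral>y. f 0 y \<partial>M)) / t) \<longlongrightarrow> (\<integral>y. f' y \<partial>M)) (at 0 within {-1<..<1})"
  proof (subst tendsto_at_iff_sequentially, intro allI impI)
    fix X :: "nat \<Rightarrow> real" assume X: "\<forall>i. X i \<in> {-1<..<1} - {0}" "X \<longlonglongrightarrow> 0"
    have X_lim: "filterlim X (at 0) sequentially" using X by (auto simp: filterlim_at)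
    have "(\<lambda>i. (f (X i) y - f 0 y) / X i) \<longlonglongrightarrow> f' y" for y
      using filterlim_compose[OF der[of y, unfolded DERIV_def] X_lim] by simp
    then have lim: "AE y in M. (\<lambda>i. (f (X i) y - f 0 y) / X i) \<longlonglongrightarrow> f' y" by simp
    have dominated: "AE y in M. norm ((f (X i) y - f 0 y) / X i) \<le> g y" for i
    proof -
      have "X i \<noteq> 0" "\<bar>X i\<bar> < 1" using X(1) by (auto simp: abs_less_iff)
      from dom[OF this] show ?thesis by (intro AE_I2) (simp only: real_norm_def)
    qed
    have "(\<lambda>y. (f (X i) y - f 0 y) / X i) \<in> borel_measurable M" for i
      by (intro borel_measurable_divide borel_measurable_diff f_meas borel_measurable_const)
    then have "(\<lambda>i. \<integral>y. (f (X i) y - f 0 y) / X i \<partial>M) \<longlonglongrightarrow> (\<integral>y. f' y \<partial>M)"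
      by (rule integral_dominated_convergence[OF f'_meas _ g lim dominated])
    moreover have "(\<integral>y. f (X i) y \<partial>M) - (\<integral>y. f 0 y \<partial>M) = (\<integral>y. f (X i) y - f 0 y \<partial>M)" for i
      by (rule Bochner_Integration.integral_diff[OF int int, symmetric])
    ultimately show "((\<lambda>t. ((\<integral>y. f t y \<partial>M) - (\<integral>y. f 0 y \<partial>M)) / t) \<circ> X) \<longlonglongrightarrow> (\<integral>y. f' y \<partial>M)"
      by (simp add: comp_def)
  qed
  then show ?thesis unfolding DERIV_def by (simp add: at_within_open[of 0 "{-1<..<1}"])
qed

lemma MVT_symmetric:
  fixes f f' :: "real \<Rightarrow> real"
  assumes der: "\<And>s. (f has_real_derivative f' s) (at s)" and t: "t \<noteq> 0"
  obtains \<xi> where "\<bar>\<xi>\<bar> \<le> \<bar>t\<bar>" "f t - f 0 = t * f' \<xi>"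
proof (cases "t > 0")
  case True
  from MVT2[OF True der] obtain z where "0 < z" "z < t" "f t - f 0 = (t - 0) * f' z" by blast
  then show thesis by (intro that[of z]) auto
next
  case False
  with t have "t < 0" by simp
  from MVT2[OF this der] obtain z where "t < z" "z < 0" "f 0 - f t = (0 - t) * f' z" by blast
  then show thesis by (intro that[of z]) auto
qed

lemma directional_diff_quotient_le:
  fixes \<phi> \<phi>' :: "real^'n::finite \<Rightarrow> real"
  assumes N0: "0 \<le> N0" and e: "norm e = 1"
    and der: "\<And>z. ((\<lambda>t. \<phi> (z + t *\<^sub>R e)) has_real_derivative \<phi>' z) (at 0)"
    and bound: "\<And>z. \<bar>\<phi>' z\<bar> \<le> C * Psi N0 z"
    and t: "t \<noteq> 0" "\<bar>t\<bar> \<le> 1"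
  shows "\<bar>(\<phi> (z + t *\<^sub>R e) - \<phi> z) / t\<bar> \<le> C * 2 powr N0 * Psi N0 z"
proof -
  have "0 \<le> C" using bound by (rule Psi_bound_nonneg)
  have d: "((\<lambda>s. \<phi> (z + s *\<^sub>R e)) has_real_derivative \<phi>' (z + s *\<^sub>R e)) (at s)" for s
    using der[of "z + s *\<^sub>R e"] DERIV_shift[of "\<lambda>s. \<phi> (z + s *\<^sub>R e)" "\<phi>' (z + s *\<^sub>R e)" 0 s]
    by (simp add: scaleR_add_left algebra_simps)
  obtain \<xi> where \<xi>: "\<bar>\<xi>\<bar> \<le> \<bar>t\<bar>" "\<phi> (z + t *\<^sub>R e) - \<phi> (z + 0 *\<^sub>R e) = t * \<phi>' (z + \<xi> *\<^sub>R e)"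
    using MVT_symmetric[OF d t(1)] by blast
  have "(2 * (1 + (norm (\<xi> *\<^sub>R e))\<^sup>2)) powr (N0 / 2) \<le> (2 * 2) powr (N0 / 2)"
    using \<xi>(1) t e N0 by (intro powr_mono2) (auto simp: abs_square_le_1)
  also have "(2 * 2 :: real) powr (N0 / 2) = 2 powr N0"
    by (simp add: powr_mult[symmetric] powr_add[symmetric])
  finally have shift: "Psi N0 (z + \<xi> *\<^sub>R e) \<le> 2 powr N0 * Psi N0 z"
    using Psi_shift_le[OF N0, of z "\<xi> *\<^sub>R e"] Psi_pos[of N0 z] by (smt (verit) mult_right_mono)
  have "\<bar>(\<phi> (z + t *\<^sub>R e) - \<phi> z) / t\<bar> = \<bar>\<phi>' (z + \<xi> *\<^sub>R e)\<bar>" using \<xi> t by simp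
  also have "\<dots> \<le> C * Psi N0 (z + \<xi> *\<^sub>R e)" by (rule bound)
  also have "\<dots> \<le> C * 2 powr N0 * Psi N0 z" using shift \<open>0 \<le> C\<close> by (simp add: mult.assoc mult_left_mono)
  finally show ?thesis .
qed

lemma conv_integrand_le:
  assumes "admissible_weight N0 h" and bound: "\<And>z. \<bar>\<phi> z\<bar> \<le> C * Psi N0 z"
  shows "\<bar>\<phi> (x - y) * h y\<bar> \<le> C * (Psi N0 (x - y) * h y)"
proof -
  have "0 \<le> h y" using assms(1) unfolding admissible_weight_def by auto
  then have "\<bar>\<phi> (x - y)\<bar> * h y \<le> C * Psi N0 (x - y) * h y" by (intro mult_right_mono bound)
  with \<open>0 \<le> h y\<close> show ?thesis by (simp add: abs_mult mult.assoc)
qed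

lemma integrable_Psi_dominated:
  fixes h \<phi> :: "real^'n::finite \<Rightarrow> real"
  assumes h: "admissible_weight N0 h" and [measurable]: "\<phi> \<in> borel_measurable borel"
    and bound: "\<And>z. \<bar>\<phi> z\<bar> \<le> C * Psi N0 z"
  shows "integrable lborel (\<lambda>y. \<phi> (x - y) * h y)"
proof (rule Bochner_Integration.integrable_bound)
  have [measurable]: "h \<in> borel_measurable borel" and "integrable lborel (\<lambda>y. Psi N0 (x - y) * h y)"
    using h unfolding admissible_weight_def by auto
  then show "integrable lborel (\<lambda>y. C * (Psi N0 (x - y) * h y))" by simp
  show "(\<lambda>y. \<phi> (x - y) * h y) \<in> borel_measurable lborel" by measurable
  show "AE y in lborel. norm (\<phi> (x - y) * h y) \<le> norm (C * (Psi N0 (x - y) * h y))"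
  proof (rule AE_I2)
    fix y
    have "\<bar>\<phi> (x - y) * h y\<bar> \<le> \<bar>C * (Psi N0 (x - y) * h y)\<bar>"
      using conv_integrand_le[OF h bound, of x y] abs_ge_self by (rule order_trans)
    then show "norm (\<phi> (x - y) * h y) \<le> norm (C * (Psi N0 (x - y) * h y))" by simp
  qed
qed

lemma conv_abs_le:
  fixes h \<phi> :: "real^'n::finite \<Rightarrow> real"
  assumes h: "admissible_weight N0 h" and \<phi>_meas[measurable]: "\<phi> \<in> borel_measurable borel"
    and bound: "\<And>z. \<bar>\<phi> z\<bar> \<le> C * Psi N0 z"
  shows "\<bar>conv h \<phi> x\<bar> \<le> C * conv h (Psi N0) x"
proof -
  have int: "integrable lborel (\<lambda>y. Psi N0 (x - y) * h y)"
    using h unfolding admissible_weight_def by auto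
  have "\<bar>conv h \<phi> x\<bar> \<le> (\<integral>y. \<bar>\<phi> (x - y) * h y\<bar> \<partial>lborel)"
    unfolding conv_def using integral_norm_bound[of lborel "\<lambda>y. \<phi> (x - y) * h y"] by simp
  also have "\<dots> \<le> (\<integral>y. C * (Psi N0 (x - y) * h y) \<partial>lborel)"
    using integrable_norm[OF integrable_Psi_dominated[OF h \<phi>_meas bound]] int conv_integrand_le[OF h bound]
    by (intro integral_mono) auto
  also have "\<dots> = C * conv h (Psi N0) x" unfolding conv_def by simp
  finally show ?thesis .
qed

lemma conv_has_directional_derivative:
  fixes h \<phi> \<phi>' :: "real^'n::finite \<Rightarrow> real"
  assumes N0: "0 \<le> N0" and e: "norm e = 1" and h: "admissible_weight N0 h"
    and \<phi>: "Psi_kernel N0 \<phi>" and \<phi>': "Psi_kernel N0 \<phi>'"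
    and der: "\<And>z. ((\<lambda>t. \<phi> (z + t *\<^sub>R e)) has_real_derivative \<phi>' z) (at 0)"
  shows "((\<lambda>t. conv h \<phi> (x + t *\<^sub>R e)) has_real_derivative conv h \<phi>' x) (at 0)"
proof -
  have [measurable]: "h \<in> borel_measurable borel" and h_nonneg: "\<And>y. 0 \<le> h y"
    and int: "integrable lborel (\<lambda>y. Psi N0 (x - y) * h y)"
    using h unfolding admissible_weight_def by auto
  have [measurable]: "\<phi> \<in> borel_measurable borel" "\<phi>' \<in> borel_measurable borel"
    using \<phi> \<phi>' by (auto intro: borel_measurable_Psi_kernel)
  obtain C where C: "\<And>z. \<bar>\<phi> z\<bar> \<le> C * Psi N0 z" using Psi_kernel_bound[OF \<phi>] by blast
  obtain C' where C': "\<And>z. \<bar>\<phi>' z\<bar> \<le> C' * Psi N0 z" using Psi_kernel_bound[OF \<phi>'] by blast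
  show ?thesis
    unfolding conv_def
  proof (rule integral_has_real_derivative_dominated)
    show "integrable lborel (\<lambda>y. \<phi> (x + t *\<^sub>R e - y) * h y)" for t
      by (rule integrable_Psi_dominated[OF h _ C]) measurable
    show "((\<lambda>t. \<phi> (x + t *\<^sub>R e - y) * h y) has_real_derivative \<phi>' (x - y) * h y) (at 0)" for y
      using der[of "x - y"] by (auto intro!: derivative_eq_intros simp: algebra_simps)
    show "integrable lborel (\<lambda>y. C' * 2 powr N0 * (Psi N0 (x - y) * h y))" using int by simp
    show "\<bar>(\<phi> (x + t *\<^sub>R e - y) * h y - \<phi> (x + 0 *\<^sub>R e - y) * h y) / t\<bar>
        \<le> C' * 2 powr N0 * (Psi N0 (x - y) * h y)" if "t \<noteq> 0" "\<bar>t\<bar> < 1" for t y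
    proof -
      have "\<bar>(\<phi> (x - y + t *\<^sub>R e) - \<phi> (x - y)) / t\<bar> * h y \<le> C' * 2 powr N0 * Psi N0 (x - y) * h y"
        using directional_diff_quotient_le[OF N0 e der C'] that h_nonneg by (intro mult_right_mono) auto
      moreover have "(\<phi> (x + t *\<^sub>R e - y) * h y - \<phi> (x + 0 *\<^sub>R e - y) * h y) / t
          = (\<phi> (x - y + t *\<^sub>R e) - \<phi> (x - y)) / t * h y"
        using that by (simp add: field_simps)
      ultimately show ?thesis using h_nonneg[of y] by (simp only: abs_mult abs_of_nonneg mult.assoc)
    qed
  qed measurable
qed

text \<open>The index of \<open>conv_expr\<close> is the degree of homogeneity in \<open>h\<close>.\<close>
inductive conv_expr :: "real \<Rightarrow> real \<Rightarrow> ((real^'n::finite \<Rightarrow> real) \<Rightarrow> real^'n \<Rightarrow> real) \<Rightarrow> bool"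
  for N0 :: real where
  power: "conv_expr N0 r (\<lambda>h x. conv h (Psi N0) x powr r)"
| kernel: "Psi_kernel N0 \<phi> \<Longrightarrow> conv_expr N0 1 (\<lambda>h. conv h \<phi>)"
| mult: "conv_expr N0 a F \<Longrightarrow> conv_expr N0 b G \<Longrightarrow> conv_expr N0 (a + b) (\<lambda>h x. F h x * G h x)"
| add: "conv_expr N0 a F \<Longrightarrow> conv_expr N0 a G \<Longrightarrow> conv_expr N0 a (\<lambda>h x. F h x + G h x)"
| scale: "conv_expr N0 a F \<Longrightarrow> conv_expr N0 a (\<lambda>h x. c * F h x)"

lemma conv_expr_bound:
  assumes "conv_expr N0 l F"
  shows "\<exists>K\<ge>0. \<forall>h x. admissible_weight N0 h \<longrightarrow> \<bar>F h x\<bar> \<le> K * conv h (Psi N0) x powr l"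
  using assms
proof (induction rule: conv_expr.induct)
  case (power r)
  show ?case by (intro exI[of _ 1]) auto
next
  case (kernel \<phi>)
  obtain C where C: "\<And>z. \<bar>\<phi> z\<bar> \<le> C * Psi N0 z" using Psi_kernel_bound[OF kernel] by blast
  have "\<bar>conv h \<phi> x\<bar> \<le> C * conv h (Psi N0) x powr 1" if "admissible_weight N0 h" for h x
    using conv_abs_le[OF that borel_measurable_Psi_kernel[OF kernel] C] that
    unfolding admissible_weight_def by (auto simp: abs_of_pos)
  with Psi_bound_nonneg[OF C] show ?case by blast
next
  case (mult a F b G)
  then obtain K1 K2 where "K1 \<ge> 0" "K2 \<ge> 0"
    and K1: "\<And>h x. admissible_weight N0 h \<Longrightarrow> \<bar>F h x\<bar> \<le> K1 * conv h (Psi N0) x powr a"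
    and K2: "\<And>h x. admissible_weight N0 h \<Longrightarrow> \<bar>G h x\<bar> \<le> K2 * conv h (Psi N0) x powr b"
    by blast
  have "\<bar>F h x * G h x\<bar> \<le> K1 * K2 * conv h (Psi N0) x powr (a + b)" if h: "admissible_weight N0 h" for h x
  proof -
    have "\<bar>F h x * G h x\<bar> \<le> (K1 * conv h (Psi N0) x powr a) * (K2 * conv h (Psi N0) x powr b)"
      unfolding abs_mult using K1[OF h] K2[OF h] \<open>K1 \<ge> 0\<close> by (intro mult_mono) auto
    then show ?thesis by (simp add: powr_add mult_ac)
  qed
  with \<open>K1 \<ge> 0\<close> \<open>K2 \<ge> 0\<close> show ?case by (intro exI[of _ "K1 * K2"]) auto
next
  case (add a F G)
  then obtain K1 K2 where "K1 \<ge> 0" "K2 \<ge> 0"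
    and "\<And>h x. admissible_weight N0 h \<Longrightarrow> \<bar>F h x\<bar> \<le> K1 * conv h (Psi N0) x powr a"
    and "\<And>h x. admissible_weight N0 h \<Longrightarrow> \<bar>G h x\<bar> \<le> K2 * conv h (Psi N0) x powr a"
    by blast
  then show ?case
    by (intro exI[of _ "K1 + K2"])
      (auto simp: distrib_right intro: order_trans[OF abs_triangle_ineq add_mono])
next
  case (scale a F c)
  then obtain K where "K \<ge> 0" and "\<And>h x. admissible_weight N0 h \<Longrightarrow> \<bar>F h x\<bar> \<le> K * conv h (Psi N0) x powr a"
    by blast
  then show ?case
    by (intro exI[of _ "\<bar>c\<bar> * K"]) (auto simp: abs_mult mult.assoc intro: mult_left_mono)
qed

lemma conv_expr_directional_deriv:
  assumes N0: "0 \<le> N0" and e: "norm e = 1" and "conv_expr N0 l F"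
  shows "\<exists>G. conv_expr N0 l G \<and>
    (\<forall>h x. admissible_weight N0 h \<longrightarrow> ((\<lambda>t. F h (x + t *\<^sub>R e)) has_real_derivative G h x) (at 0))"
  using assms(3)
proof (induction rule: conv_expr.induct)
  case (power r)
  obtain \<psi> where \<psi>: "Psi_kernel N0 \<psi>" and
    d\<psi>: "\<And>z. ((\<lambda>t. Psi N0 (z + t *\<^sub>R e)) has_real_derivative \<psi> z) (at 0)"
    using Psi_kernel_directional_deriv[OF Psi_kernel_Psi] by blast
  have "conv_expr N0 (r - 1 + 1) (\<lambda>h x. conv h (Psi N0) x powr (r - 1) * conv h \<psi> x)"
    by (intro conv_expr.mult conv_expr.power conv_expr.kernel \<psi>)
  then have "conv_expr N0 r (\<lambda>h x. r * (conv h (Psi N0) x powr (r - 1) * conv h \<psi> x))"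
    by (auto intro: conv_expr.scale)
  moreover have "((\<lambda>t. conv h (Psi N0) (x + t *\<^sub>R e) powr r) has_real_derivative
      r * (conv h (Psi N0) x powr (r - 1) * conv h \<psi> x)) (at 0)" if h: "admissible_weight N0 h" for h x
    using DERIV_fun_powr[OF conv_has_directional_derivative[OF N0 e h Psi_kernel_Psi \<psi> d\<psi>, of x], of r] h
    unfolding admissible_weight_def by (simp add: mult.assoc)
  ultimately show ?case by blast
next
  case (kernel \<phi>)
  then obtain \<phi>' where "Psi_kernel N0 \<phi>'" "\<And>z. ((\<lambda>t. \<phi> (z + t *\<^sub>R e)) has_real_derivative \<phi>' z) (at 0)"
    using Psi_kernel_directional_deriv by blast
  with kernel show ?case
    by (intro exI[of _ "\<lambda>h. conv h \<phi>'"]) (auto intro: conv_expr.kernel conv_has_directional_derivative[OF N0 e])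
next
  case (mult a F b G)
  then obtain F' G' where "conv_expr N0 a F'" "conv_expr N0 b G'"
    and "\<And>h x. admissible_weight N0 h \<Longrightarrow> ((\<lambda>t. F h (x + t *\<^sub>R e)) has_real_derivative F' h x) (at 0)"
    and "\<And>h x. admissible_weight N0 h \<Longrightarrow> ((\<lambda>t. G h (x + t *\<^sub>R e)) has_real_derivative G' h x) (at 0)"
    by blast
  with mult.hyps show ?case
    by (intro exI[of _ "\<lambda>h x. F' h x * G h x + F h x * G' h x"])
      (auto intro!: conv_expr.add conv_expr.mult derivative_eq_intros)
next
  case (add a F G)
  then obtain F' G' where "conv_expr N0 a F'" "conv_expr N0 a G'"
    and "\<And>h x. admissible_weight N0 h \<Longrightarrow> ((\<lambda>t. F h (x + t *\<^sub>R e)) has_real_derivative F' h x) (at 0)"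
    and "\<And>h x. admissible_weight N0 h \<Longrightarrow> ((\<lambda>t. G h (x + t *\<^sub>R e)) has_real_derivative G' h x) (at 0)"
    by blast
  then show ?case
    by (intro exI[of _ "\<lambda>h x. F' h x + G' h x"]) (auto intro!: conv_expr.add derivative_eq_intros)
next
  case (scale a F c)
  then obtain F' where "conv_expr N0 a F'"
    and "\<And>h x. admissible_weight N0 h \<Longrightarrow> ((\<lambda>t. F h (x + t *\<^sub>R e)) has_real_derivative F' h x) (at 0)"
    by blast
  then show ?case
    by (intro exI[of _ "\<lambda>h x. c * F' h x"]) (auto intro!: conv_expr.scale derivative_eq_intros)
qed

lemma conv_expr_partials:
  assumes N0: "0 \<le> N0" and F: "conv_expr N0 l F"
  shows "\<exists>G. conv_expr N0 l G \<and> (\<forall>h. admissible_weight N0 h \<longrightarrow> partials L (F h) = G h)"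
proof (induction L)
  case Nil
  from F show ?case by auto
next
  case (Cons i L)
  then obtain G where G: "conv_expr N0 l G" and
    G_eq: "\<And>h. admissible_weight N0 h \<Longrightarrow> partials L (F h) = G h" by blast
  obtain G' where "conv_expr N0 l G'" and
    "\<And>h x. admissible_weight N0 h \<Longrightarrow> ((\<lambda>t. G h (x + t *\<^sub>R axis i 1)) has_real_derivative G' h x) (at 0)"
    using conv_expr_directional_deriv[OF N0 norm_axis_1 G] by blast
  then show ?case
    by (intro exI[of _ G']) (auto simp: G_eq partial_def fun_eq_iff intro: DERIV_imp_deriv)
qed

lemma conv_Psi_shift_le:
  assumes N0: "0 \<le> N0" and h: "admissible_weight N0 h"
  shows "conv h (Psi N0) (x + s) \<le> (2 * (1 + (norm s)\<^sup>2)) powr (N0 / 2) * conv h (Psi N0) x"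
proof -
  define B where "B = (2 * (1 + (norm s)\<^sup>2)) powr (N0 / 2)"
  have h_nonneg: "\<And>y. 0 \<le> h y" and int: "\<And>x. integrable lborel (\<lambda>y. Psi N0 (x - y) * h y)"
    using h unfolding admissible_weight_def by auto
  have "conv h (Psi N0) (x + s) \<le> (\<integral>y. B * (Psi N0 (x - y) * h y) \<partial>lborel)"
    unfolding conv_def
  proof (rule integral_mono)
    show "integrable lborel (\<lambda>y. Psi N0 (x + s - y) * h y)" by (rule int)
    show "integrable lborel (\<lambda>y. B * (Psi N0 (x - y) * h y))" using int[of x] by simp
    fix y
    have "Psi N0 ((x - y) + s) \<le> B * Psi N0 (x - y)" unfolding B_def by (rule Psi_shift_le[OF N0])
    from mult_right_mono[OF this h_nonneg[of y]]
    show "Psi N0 (x + s - y) * h y \<le> B * (Psi N0 (x - y) * h y)" by (simp add: algebra_simps)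
  qed
  then show ?thesis unfolding conv_def B_def by simp
qed

lemma conv_Psi_powr_le:
  assumes N0: "0 \<le> N0" and h: "admissible_weight N0 h"
  shows "conv h (Psi N0) x powr l
    \<le> 2 powr (N0 * \<bar>l\<bar> / 2) * (1 + (norm x)\<^sup>2) powr (N0 * \<bar>l\<bar> / 2) * conv h (Psi N0) 0 powr l"
proof -
  define B where "B = (2 * (1 + (norm x)\<^sup>2)) powr (N0 / 2)"
  define A where "A = conv h (Psi N0)"
  have A_pos: "0 < A y" for y using h unfolding A_def admissible_weight_def by auto
  have B_pos: "0 < B" unfolding B_def using one_plus_norm_sq_pos[of x] by simp
  have upper: "A x \<le> B * A 0" using conv_Psi_shift_le[OF N0 h, of 0 x] unfolding A_def B_def by simp
  have lower: "A 0 \<le> B * A x" using conv_Psi_shift_le[OF N0 h, of x "- x"] unfolding A_def B_def by simp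
  have "A x powr l \<le> B powr \<bar>l\<bar> * A 0 powr l"
  proof (cases "0 \<le> l")
    case True
    have "A x powr l \<le> (B * A 0) powr l" using A_pos[of x] upper True by (intro powr_mono2) auto
    then show ?thesis using True B_pos A_pos by (simp add: powr_mult)
  next
    case False
    have "A 0 / B \<le> A x" using lower B_pos by (simp add: divide_le_eq mult.commute)
    then have "A x powr l \<le> (A 0 / B) powr l" using False A_pos[of 0] B_pos by (intro powr_mono2') auto
    also have "\<dots> = A 0 powr l / B powr l" by (rule powr_divide)
    also have "\<dots> = B powr (- l) * A 0 powr l"
      by (simp add: powr_minus divide_inverse mult.commute)
    finally show ?thesis using False by simp
  qed
  moreover have "B powr \<bar>l\<bar> = 2 powr (N0 * \<bar>l\<bar> / 2) * (1 + (norm x)\<^sup>2) powr (N0 * \<bar>l\<bar> / 2)"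
    unfolding B_def powr_powr by (simp add: powr_mult[symmetric])
  ultimately show ?thesis unfolding A_def by simp
qed

lemma Dmulti_conv_Psi_powr_bound:
  fixes \<gamma> :: "'n::finite \<Rightarrow> nat"
  assumes "0 \<le> N0"
  obtains K where "0 \<le> K" "\<And>h :: real^'n \<Rightarrow> real. \<And>x. admissible_weight N0 h \<Longrightarrow>
    \<bar>Dmulti \<gamma> (\<lambda>z. conv h (Psi N0) z powr l) x\<bar> \<le> K * conv h (Psi N0) x powr l"
proof -
  obtain G where "conv_expr N0 l G" and G_eq: "\<And>h. admissible_weight N0 h \<Longrightarrow>
      Dmulti \<gamma> (\<lambda>z. conv h (Psi N0) z powr l) = G h"
    using conv_expr_partials[OF assms conv_expr.power] unfolding Dmulti_def by blast
  with conv_expr_bound show thesis by (metis that)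
qed

lemma enn2real_Aw_eq_conv:
  assumes "\<forall>x. 0 < Aw N0 w x \<and> Aw N0 w x < \<infinity>"
  obtains h where "admissible_weight N0 h" "\<And>x. enn2real (Aw N0 w x) = conv h (Psi N0) x"
proof -
  obtain h where h: "admissible_weight N0 h" and "\<And>x. Aw N0 w x = ennreal (conv h (Psi N0) x)"
    using nn_convolution_Psi_eq_conv[of N0 "wtilde w"] assms unfolding Aw_def by blast
  moreover have "\<And>x. 0 \<le> conv h (Psi N0) x" using h unfolding admissible_weight_def by (auto intro: less_imp_le)
  ultimately show thesis by (intro that) auto
qed

theorem lemma6p4:
  fixes N0 :: real and l :: real and \<gamma> :: "'n::finite \<Rightarrow> nat"
  assumes "N0 > real CARD('n)"
  shows "\<exists>C::real. \<forall>w :: real ^ 'n \<Rightarrow> real.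
           (\<forall>x. 0 \<le> w x) \<longrightarrow> (\<forall>x. 0 < Aw N0 w x \<and> Aw N0 w x < \<infinity>) \<longrightarrow>
           (\<forall>x. \<bar>Dmulti \<gamma> (\<lambda>z. enn2real (Aw N0 w z) powr l) x\<bar>
                   \<le> C * enn2real (Aw N0 w x) powr l
                \<and> C * enn2real (Aw N0 w x) powr l
                   \<le> C\<^sup>2 * (1 + (norm x)\<^sup>2) powr (N0 * \<bar>l\<bar> / 2) * enn2real (Aw N0 w 0) powr l)"
proof -
  \<comment> \<open>\<open>N0 > CARD('n)\<close> is only used as \<open>0 \<le> N0\<close>, and \<open>0 \<le> w\<close> not at all: \<open>wtilde\<close> already cuts
    off negative values through \<open>ennreal\<close>.\<close>
  have N0: "0 \<le> N0" using assms by (smt (verit) of_nat_0_le_iff)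
  obtain K where K: "\<And>h x. admissible_weight N0 h \<Longrightarrow>
      \<bar>Dmulti \<gamma> (\<lambda>z. conv h (Psi N0) z powr l) x\<bar> \<le> K * conv h (Psi N0) x powr l"
    using Dmulti_conv_Psi_powr_bound[OF N0] by blast
  define C where "C = max (max K 1) (2 powr (N0 * \<bar>l\<bar> / 2))"
  show ?thesis
  proof (intro exI[of _ C] allI impI conjI)
    fix w :: "real^'n \<Rightarrow> real" and x :: "real^'n"
    assume "\<forall>x. 0 < Aw N0 w x \<and> Aw N0 w x < \<infinity>"
    then obtain h where h: "admissible_weight N0 h" and A: "\<And>x. enn2real (Aw N0 w x) = conv h (Psi N0) x"
      using enn2real_Aw_eq_conv by blast
    show "\<bar>Dmulti \<gamma> (\<lambda>z. enn2real (Aw N0 w z) powr l) x\<bar> \<le> C * enn2real (Aw N0 w x) powr l"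
      unfolding A using K[OF h, of x] unfolding C_def by (smt (verit) mult_right_mono powr_ge_zero)
    have "conv h (Psi N0) x powr l \<le> C * (1 + (norm x)\<^sup>2) powr (N0 * \<bar>l\<bar> / 2) * conv h (Psi N0) 0 powr l"
      using conv_Psi_powr_le[OF N0 h, of x l] unfolding C_def by (smt (verit) mult_right_mono powr_ge_zero)
    then show "C * enn2real (Aw N0 w x) powr l
        \<le> C\<^sup>2 * (1 + (norm x)\<^sup>2) powr (N0 * \<bar>l\<bar> / 2) * enn2real (Aw N0 w 0) powr l"
      unfolding A C_def by (simp add: power2_eq_square mult.assoc mult_left_mono)
  qed
qed

end
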